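(* In the variety $\mathcal V$, the ternary term $p(x,y,z):=\Big(x\wedge\big((z\wedge y)\vee y'\big)\Big)\vee\Big(z\wedge\big((x\wedge y)\vee y'\big)\Big)$ satisfies the identities $p(x,x,z)\approx z$ and $p(x,z,z)\approx x$. Moreover, putting $u:=(x\wedge y)\vee(x\vee y)'$, for every $\mathbf L\in\mathcal V$ and all $x,y,z\in L$ we have: $u\wedge z=z$ and $u'\vee z=z$ if and only if $x=y$.
   Context: $\mathcal V$ is the variety of algebras $(L,\vee,\wedge,{}',0,1)$ that are bounded lattices with a complementation $'$ (i.e. $x\vee x'\approx1$, $x\wedge x'\approx0$) satisfying the identities $x\vee y'\approx y'\vee\big((x\vee y')\wedge y\big)$ and $x\wedge y\approx x\wedge\big((x\wedge y)\vee x'\big)$. *)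

theory Defs
  imports Main
begin

text \<open>An algebra of the variety V: a bounded lattice (type class bounded_lattice,
  with sup, inf, bot = 0, top = 1) together with a unary operation c (the
  complementation x') satisfying the defining identities of V.\<close>

definition in_V :: "('a::bounded_lattice \<Rightarrow> 'a) \<Rightarrow> bool" where
  "in_V c \<longleftrightarrow>
     (\<forall>x. sup x (c x) = top) \<and>
     (\<forall>x. inf x (c x) = bot) \<and>
     (\<forall>x y. sup x (c y) = sup (c y) (inf (sup x (c y)) y)) \<and>
     (\<forall>x y. inf x y = inf x (sup (inf x y) (c x)))"

definition pV :: "('a::bounded_lattice \<Rightarrow> 'a) \<Rightarrow> 'a \<Rightarrow> 'a \<Rightarrow> 'a \<Rightarrow> 'a" where
  "pV c x y z = sup (inf x (sup (inf z y) (c y))) (inf z (sup (inf x y) (c y)))"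

end

theory Submission
  imports Defs
begin

text \<open>Both Mal'cev identities for p follow from the absorption law
  x \<and> y = x \<and> ((x \<and> y) \<or> x') together with y \<or> y' = 1. For the second part,
  in any complemented lattice the conditions u \<and> z = z and u' \<or> z = z say
  u' \<le> z \<le> u, which forces u' = 0 and hence u = 1. Applying the absorption
  law to x \<or> y and x \<and> y shows x \<and> y = (x \<or> y) \<and> u, so u = 1 makes
  x \<and> y = x \<or> y, i.e. x = y; conversely x = y gives u = x \<or> x' = 1.\<close>

lemma in_V_sup_compl: "in_V c \<Longrightarrow> sup x (c x) = top"
  and in_V_inf_compl: "in_V c \<Longrightarrow> inf x (c x) = bot"
  and in_V_inf_absorb: "in_V c \<Longrightarrow> inf x y = inf x (sup (inf x y) (c x))"
  unfolding in_V_def by blast+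

lemma pV_left_cancel:
  assumes "in_V c" shows "pV c x x z = z"
proof -
  have "inf x (sup (inf z x) (c x)) = inf x z"
    using in_V_inf_absorb[OF assms, of x z] by (simp add: inf_commute)
  then show ?thesis
    unfolding pV_def using in_V_sup_compl[OF assms, of x]
    by (simp add: inf_commute sup_absorb2)
qed

lemma pV_right_cancel:
  assumes "in_V c" shows "pV c x z z = x"
proof -
  have "inf z (sup (inf x z) (c z)) = inf z x"
    using in_V_inf_absorb[OF assms, of z x] by (simp add: inf_commute)
  then show ?thesis
    unfolding pV_def using in_V_sup_compl[OF assms, of z]
    by (simp add: inf_commute sup_absorb1)
qed

lemma complement_sandwich_iff_top:
  fixes c :: "'a::bounded_lattice \<Rightarrow> 'a"
  assumes sup_compl: "\<And>x. sup x (c x) = top" and inf_compl: "\<And>x. inf x (c x) = bot"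
  shows "(inf u z = z \<and> sup (c u) z = z) \<longleftrightarrow> u = top"
proof
  assume "inf u z = z \<and> sup (c u) z = z"
  then have "c u \<le> u"
    by (metis inf.absorb_iff2 sup.absorb_iff2 order.trans)
  then have "c u = bot"
    using inf_compl[of u] by (metis inf.absorb2)
  then show "u = top"
    using sup_compl[of u] by simp
next
  assume "u = top"
  moreover have "c top = bot"
    using inf_compl[of top] by simp
  ultimately show "inf u z = z \<and> sup (c u) z = z"
    by simp
qed

lemma in_V_inf_eq_sup_inf_eq_term:
  assumes "in_V c"
  shows "inf x y = inf (sup x y) (sup (inf x y) (c (sup x y)))"
  using in_V_inf_absorb[OF assms, of "sup x y" "inf x y"]
  by (metis inf.absorb2 inf_le1 le_supI1)

lemma in_V_eq_term_eq_top_iff: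
  assumes "in_V c"
  shows "sup (inf x y) (c (sup x y)) = top \<longleftrightarrow> x = y"
proof
  assume "sup (inf x y) (c (sup x y)) = top"
  then have "inf x y = sup x y"
    using in_V_inf_eq_sup_inf_eq_term[OF assms, of x y] by simp
  then show "x = y"
    by (metis inf.cobounded1 inf.cobounded2 sup.cobounded1 sup.cobounded2 order.antisym)
next
  assume "x = y"
  then show "sup (inf x y) (c (sup x y)) = top"
    using in_V_sup_compl[OF assms, of x] by simp
qed

theorem mainTheorem6:
  fixes c :: "'a::bounded_lattice \<Rightarrow> 'a"
  assumes "in_V c"
  shows "(\<forall>x z. pV c x x z = z) \<and> (\<forall>x z. pV c x z z = x) \<and>
         (\<forall>x y z. let u = sup (inf x y) (c (sup x y))
                  in (inf u z = z \<and> sup (c u) z = z) \<longleftrightarrow> x = y)"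
  using pV_left_cancel[OF assms] pV_right_cancel[OF assms]
    complement_sandwich_iff_top[OF in_V_sup_compl[OF assms] in_V_inf_compl[OF assms]]
    in_V_eq_term_eq_top_iff[OF assms]
  by (simp add: Let_def)

end
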